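(* Let $X$ be a graph with real symmetric Hamiltonian $M$ and transition matrix $U(t)=e^{-\mathrm{i}tM}$. Let $a\ne b$ be cospectral vertices of $X$ and $s\in\mathbb{C}\setminus\{0\}$. If $\mathbf e_a+s\mathbf e_b$ is periodic at time $\tau$, i.e. $U(\tau)(\mathbf e_a+s\mathbf e_b)=\eta(\mathbf e_a+s\mathbf e_b)$ for some $|\eta|=1$, then either $s=\pm1$, or both $a$ and $b$ are periodic at time $\tau$, i.e. $U(\tau)\mathbf e_a=\eta\mathbf e_a$ and $U(\tau)\mathbf e_b=\eta\mathbf e_b$.
   Context: Vertices $a,b$ are cospectral (with respect to $M$) if $(M^h)_{a,a}=(M^h)_{b,b}$ for all integers $h\ge0$, equivalently $(E_\lambda)_{a,a}=(E_\lambda)_{b,b}$ for every spectral projection $E_\lambda$ of $M$. *)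

theory Defs
  imports "HOL-Analysis.Analysis"
begin

definition mpow :: "'a::semiring_1^'n^'n \<Rightarrow> nat \<Rightarrow> 'a^'n^'n" where
  "mpow A k = ((\<lambda>B. A ** B) ^^ k) (mat 1)"

definition mexp :: "complex^'n^'n \<Rightarrow> complex^'n^'n" where
  "mexp A = (\<Sum>k. (inverse (fact k) :: real) *\<^sub>R mpow A k)"

definition transition :: "real^'n^'n \<Rightarrow> real \<Rightarrow> complex^'n^'n" where
  "transition M t = mexp (\<chi> i j. - \<i> * complex_of_real t * complex_of_real (M $ i $ j))"

definition evec :: "'n \<Rightarrow> complex^'n" where
  "evec a = (\<chi> i. if i = a then 1 else 0)"

definition cospectral :: "real^'n^'n \<Rightarrow> 'n \<Rightarrow> 'n \<Rightarrow> bool" where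
  "cospectral M a b \<longleftrightarrow> (\<forall>h. mpow M h $ a $ a = mpow M h $ b $ b)"

end

theory Submission
  imports Defs
begin

text \<open>Write \<open>U = U(\<tau>)\<close>. Since \<open>M\<close> is symmetric, so is \<open>U\<close>; cospectrality gives
\<open>U\<^sub>a\<^sub>a = U\<^sub>b\<^sub>b\<close>; and \<open>U\<close> is unitary, so each of its columns is a unit vector. Reading off
the \<open>a\<close>- and \<open>b\<close>-entries of \<open>U(e\<^sub>a + s e\<^sub>b) = \<eta>(e\<^sub>a + s e\<^sub>b)\<close> gives
\<open>U\<^sub>a\<^sub>a + s U\<^sub>a\<^sub>b = \<eta>\<close> and \<open>U\<^sub>a\<^sub>b + s U\<^sub>a\<^sub>a = s \<eta>\<close>, hence \<open>(1 - s\<^sup>2) U\<^sub>a\<^sub>b = 0\<close>.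
Either \<open>s = \<plusminus>1\<close>, or \<open>U\<^sub>a\<^sub>b = 0\<close> and then \<open>U\<^sub>a\<^sub>a = U\<^sub>b\<^sub>b = \<eta>\<close>; a unit column whose
diagonal entry has modulus one vanishes off the diagonal, so \<open>U e\<^sub>a = \<eta> e\<^sub>a\<close> and
\<open>U e\<^sub>b = \<eta> e\<^sub>b\<close>.\<close>

lemma mpow_0 [simp]: "mpow A 0 = mat 1"
  by (simp add: mpow_def)

lemma mpow_Suc: "mpow A (Suc k) = A ** mpow A k"
  by (simp add: mpow_def)

lemma mpow_commute: "mpow A k ** A = A ** mpow A k"
proof (induction k)
  case (Suc k)
  then show ?case by (simp add: mpow_Suc flip: matrix_mul_assoc)
qed simp

lemma mpow_add: "mpow A p ** mpow A q = mpow A (p + q)"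
  by (induction p) (simp_all add: mpow_Suc flip: matrix_mul_assoc)

lemma symmetric_mpow:
  fixes A :: "'a::comm_semiring_1^'n^'n"
  assumes "transpose A = A"
  shows "transpose (mpow A k) = mpow A k"
proof (induction k)
  case (Suc k)
  then show ?case
    using assms by (simp add: mpow_Suc matrix_transpose_mul mpow_commute)
qed simp

lemma mpow_scaled_of_real_nth:
  fixes z :: "'a::{real_algebra_1, comm_ring_1}"
  shows "mpow (\<chi> i j. z * of_real (M $ i $ j)) k $ i $ j = z ^ k * of_real (mpow M k $ i $ j)"
  by (induction k arbitrary: i j)
     (simp_all add: mat_def mpow_Suc matrix_matrix_mult_def sum_distrib_left mult_ac)

lemma abs_mpow_nth_le:
  fixes M :: "real^'n^'n"
  shows "\<bar>mpow M k $ i $ j\<bar> \<le> (\<Sum>i\<in>UNIV. \<Sum>j\<in>UNIV. \<bar>M $ i $ j\<bar>) ^ k"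
proof (induction k arbitrary: i j)
  case 0
  then show ?case by (simp add: mat_def)
next
  case (Suc k)
  define S where "S = (\<Sum>i\<in>UNIV. \<Sum>j\<in>UNIV. \<bar>M $ i $ j\<bar>)"
  have "\<bar>mpow M (Suc k) $ i $ j\<bar> = \<bar>\<Sum>l\<in>UNIV. M $ i $ l * mpow M k $ l $ j\<bar>"
    by (simp add: mpow_Suc matrix_matrix_mult_def)
  also have "\<dots> \<le> (\<Sum>l\<in>UNIV. \<bar>M $ i $ l\<bar>) * S ^ k"
    unfolding sum_distrib_right
    by (rule order_trans[OF sum_abs])
       (auto intro!: sum_mono mult_left_mono simp: abs_mult Suc[folded S_def])
  also have "\<dots> \<le> S * S ^ k"
  proof (rule mult_right_mono)
    show "(\<Sum>l\<in>UNIV. \<bar>M $ i $ l\<bar>) \<le> S"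
      unfolding S_def
      by (rule member_le_sum[where f = "\<lambda>i. \<Sum>l\<in>UNIV. \<bar>M $ i $ l\<bar>"]) (auto intro: sum_nonneg)
    show "0 \<le> S ^ k"
      unfolding S_def by (auto intro!: zero_le_power sum_nonneg)
  qed
  finally show ?case by (simp add: S_def)
qed

lemma norm_vec_le_sum_norm_nth: "norm (x :: 'a::real_normed_vector^'n) \<le> (\<Sum>i\<in>UNIV. norm (x $ i))"
  unfolding norm_vec_def by (rule L2_set_le_sum) auto

lemma suminf_matrix_nth:
  fixes f :: "nat \<Rightarrow> 'a::banach^'n^'m"
  assumes "\<And>i j. summable (\<lambda>k. norm (f k $ i $ j))"
  shows "suminf f $ i $ j = (\<Sum>k. f k $ i $ j)"
proof -
  have "summable f"
  proof (rule summable_comparison_test'[where N = 0])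
    show "summable (\<lambda>k. \<Sum>i\<in>UNIV. \<Sum>j\<in>UNIV. norm (f k $ i $ j))"
      by (intro summable_sum assms)
    show "norm (f k) \<le> (\<Sum>i\<in>UNIV. \<Sum>j\<in>UNIV. norm (f k $ i $ j))" for k
      by (rule order_trans[OF norm_vec_le_sum_norm_nth]) (intro sum_mono norm_vec_le_sum_norm_nth)
  qed
  then have "summable (\<lambda>k. f k $ i)"
    by (rule bounded_linear.summable[OF bounded_linear_vec_nth])
  with \<open>summable f\<close> show ?thesis
    using bounded_linear.suminf[OF bounded_linear_vec_nth] by metis
qed

definition exp_term :: "complex \<Rightarrow> real^'n^'n \<Rightarrow> 'n \<Rightarrow> 'n \<Rightarrow> nat \<Rightarrow> complex" where
  "exp_term z M i j k = of_real (inverse (fact k)) * z ^ k * of_real (mpow M k $ i $ j)"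

lemma summable_norm_exp_term: "summable (\<lambda>k. norm (exp_term z M i j k))"
proof (rule summable_comparison_test'[where N = 0])
  define S where "S = (\<Sum>i\<in>UNIV. \<Sum>j\<in>UNIV. \<bar>M $ i $ j\<bar>)"
  show "summable (\<lambda>k. (cmod z * S) ^ k /\<^sub>R fact k)"
    by (rule summable_exp_generic)
  show "norm (norm (exp_term z M i j k)) \<le> (cmod z * S) ^ k /\<^sub>R fact k" for k
  proof -
    have "norm (norm (exp_term z M i j k)) = inverse (fact k) * cmod z ^ k * \<bar>mpow M k $ i $ j\<bar>"
      by (simp add: exp_term_def norm_mult norm_power norm_inverse)
    also have "\<dots> \<le> inverse (fact k) * cmod z ^ k * S ^ k"
      using abs_mpow_nth_le[of M k i j] by (intro mult_left_mono) (auto simp: S_def)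
    finally show ?thesis
      by (simp add: power_mult_distrib divide_inverse mult_ac)
  qed
qed

lemma summable_exp_term: "summable (exp_term z M i j)"
  using summable_norm_exp_term summable_norm_cancel by blast

lemma transition_nth: "transition M t $ i $ j = (\<Sum>k. exp_term (- \<i> * of_real t) M i j k)"
proof -
  define z where "z = - \<i> * complex_of_real t"
  define f where "f k = (inverse (fact k) :: real) *\<^sub>R mpow (\<chi> i j. z * of_real (M $ i $ j)) k" for k
  have f_nth: "f k $ i $ j = exp_term z M i j k" for k i j
    unfolding f_def vector_scaleR_component mpow_scaled_of_real_nth
    by (simp add: exp_term_def scaleR_conv_of_real mult.assoc)
  have "transition M t = suminf f"
    unfolding transition_def mexp_def f_def z_def ..
  then show ?thesis
    using suminf_matrix_nth[of f] by (simp add: f_nth z_def summable_norm_exp_term)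
qed

lemma cnj_transition_nth: "cnj (transition M t $ i $ j) = (\<Sum>k. exp_term (\<i> * of_real t) M i j k)"
proof -
  have "exp_term (- \<i> * of_real t) M i j sums transition M t $ i $ j"
    by (simp add: transition_nth summable_sums summable_exp_term)
  then have "(\<lambda>k. cnj (exp_term (- \<i> * of_real t) M i j k)) sums cnj (transition M t $ i $ j)"
    by (simp only: sums_cnj)
  then show ?thesis
    by (simp add: exp_term_def sums_iff)
qed

lemma symmetric_transition:
  assumes "transpose M = M"
  shows "transition M t $ i $ j = transition M t $ j $ i"
proof -
  have "mpow M k $ i $ j = mpow M k $ j $ i" for k
    using symmetric_mpow[OF assms, of k] by (metis transpose_def vec_lambda_beta)
  then show ?thesis
    by (simp add: transition_nth exp_term_def)
qed

lemma cospectral_transition_diag: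
  assumes "cospectral M a b"
  shows "transition M t $ a $ a = transition M t $ b $ b"
  using assms by (simp add: transition_nth exp_term_def cospectral_def)

lemma exp_term_neg_mult_exp_term:
  assumes "transpose M = M" and "p \<le> m"
  shows "exp_term (- z) M l a p * exp_term z M l a (m - p) =
     of_nat (m choose p) * ((-1) ^ p * (z ^ m / fact m))
       * of_real (mpow M p $ a $ l * mpow M (m - p) $ l $ a)"
proof -
  have sym: "mpow M p $ l $ a = mpow M p $ a $ l"
    using symmetric_mpow[OF assms(1), of p] by (metis transpose_def vec_lambda_beta)
  have binom: "(of_nat (m choose p) :: complex) = fact m / (fact p * fact (m - p))"
    by (rule binomial_fact[OF assms(2)])
  have zm: "z ^ m = z ^ p * z ^ (m - p)"
    using assms(2) by (simp add: power_add[symmetric])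
  have "(fact m / (fact p * fact (m - p)) :: complex) * ((-1) ^ p * (z ^ p * z ^ (m - p) / fact m))
       = (-1) ^ p * z ^ p * z ^ (m - p) * (inverse (fact p) * inverse (fact (m - p)))"
    by (simp add: divide_inverse mult_ac)
  then show ?thesis
    unfolding exp_term_def sym binom zm power_minus[of z p]
    by (simp add: mult_ac)
qed

text \<open>These are the Cauchy-product coefficients of \<open>\<Sum>\<^sub>l cnj U\<^sub>l\<^sub>a U\<^sub>l\<^sub>a\<close>. By symmetry of \<open>M\<close>
the sum over \<open>l\<close> collapses to \<open>(M\<^sup>m)\<^sub>a\<^sub>a\<close>, leaving an alternating binomial sum.\<close>

lemma sum_Cauchy_product_exp_term:
  assumes "transpose M = M"
  shows "(\<Sum>l\<in>UNIV. \<Sum>p\<le>m. exp_term (- z) M l a p * exp_term z M l a (m - p))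
           = (if m = 0 then 1 else 0)"
proof -
  have collapse: "(\<Sum>l\<in>UNIV. mpow M p $ a $ l * mpow M (m - p) $ l $ a) = mpow M m $ a $ a"
    if "p \<le> m" for p
    using mpow_add[of M p "m - p"] that by (simp add: matrix_matrix_mult_def vec_eq_iff)
  have "(\<Sum>l\<in>UNIV. \<Sum>p\<le>m. exp_term (- z) M l a p * exp_term z M l a (m - p))
     = (\<Sum>p\<le>m. \<Sum>l\<in>UNIV. exp_term (- z) M l a p * exp_term z M l a (m - p))"
    by (rule sum.swap)
  also have "\<dots> = (\<Sum>p\<le>m. of_nat (m choose p) * ((-1) ^ p * (z ^ m / fact m))
                      * of_real (\<Sum>l\<in>UNIV. mpow M p $ a $ l * mpow M (m - p) $ l $ a))"
    by (intro sum.cong refl) (simp add: exp_term_neg_mult_exp_term[OF assms] sum_distrib_left)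
  also have "\<dots> = (\<Sum>p\<le>m. ((-1) ^ p * of_nat (m choose p))
                      * (z ^ m / fact m * of_real (mpow M m $ a $ a)))"
    by (intro sum.cong refl) (simp only: atMost_iff collapse mult_ac)
  also have "\<dots> = (if m = 0 then 1 else 0)"
    unfolding sum_distrib_right[symmetric]
    by (cases "m = 0") (simp_all add: mat_def choose_alternating_sum)
  finally show ?thesis .
qed

lemma sum_norm_transition_column:
  assumes "transpose M = M"
  shows "(\<Sum>l\<in>UNIV. (cmod (transition M t $ l $ a))\<^sup>2) = 1"
proof -
  define z where "z = - \<i> * complex_of_real t"
  have neg_z: "\<i> * complex_of_real t = - z"
    by (simp add: z_def)
  have "(\<lambda>m. \<Sum>p\<le>m. exp_term (- z) M l a p * exp_term z M l a (m - p)) sums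
          (cnj (transition M t $ l $ a) * transition M t $ l $ a)" for l
    unfolding cnj_transition_nth neg_z unfolding transition_nth z_def[symmetric]
    by (rule Cauchy_product_sums[OF summable_norm_exp_term summable_norm_exp_term])
  then have "(\<lambda>m. \<Sum>l\<in>UNIV. \<Sum>p\<le>m. exp_term (- z) M l a p * exp_term z M l a (m - p)) sums
               (\<Sum>l\<in>UNIV. cnj (transition M t $ l $ a) * transition M t $ l $ a)"
    by (rule sums_sum)
  then have "(\<lambda>m. if m = 0 then 1 else 0) sums
               (\<Sum>l\<in>UNIV. cnj (transition M t $ l $ a) * transition M t $ l $ a)"
    by (simp only: sum_Cauchy_product_exp_term[OF assms])
  then have "(\<Sum>l\<in>UNIV. cnj (transition M t $ l $ a) * transition M t $ l $ a) = 1"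
    using sums_single[of 0 "\<lambda>_. 1 :: complex"] sums_unique2 by fastforce
  moreover have "cnj x * x = of_real ((cmod x)\<^sup>2)" for x
    using complex_norm_square[of x] by (simp add: mult.commute)
  ultimately have "complex_of_real (\<Sum>l\<in>UNIV. (cmod (transition M t $ l $ a))\<^sup>2) = 1"
    by (simp only: of_real_sum)
  then show ?thesis
    using of_real_eq_1_iff by blast
qed

lemma matrix_vector_mult_evec_nth: "(A *v evec c) $ i = A $ i $ c"
  by (simp add: matrix_vector_mult_def evec_def if_distrib cong: if_cong)

lemma transition_evec_eigen_if_diag:
  assumes "transpose M = M" and "transition M t $ c $ c = \<eta>" and "cmod \<eta> = 1"
  shows "transition M t *v evec c = \<eta> *s evec c"
proof -
  define U where "U = transition M t"
  have "(\<Sum>l\<in>UNIV. (cmod (U $ l $ c))\<^sup>2) = (cmod (U $ c $ c))\<^sup>2 + (\<Sum>l\<in>UNIV - {c}. (cmod (U $ l $ c))\<^sup>2)"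
    by (simp add: sum.remove)
  then have "(\<Sum>l\<in>UNIV - {c}. (cmod (U $ l $ c))\<^sup>2) = 0"
    using sum_norm_transition_column[OF assms(1)] assms(2,3) by (simp add: U_def)
  then have "U $ l $ c = 0" if "l \<noteq> c" for l
    using that by (subst (asm) sum_nonneg_eq_0_iff) auto
  then show ?thesis
    unfolding U_def[symmetric] vec_eq_iff vector_smult_component matrix_vector_mult_evec_nth
    using assms(2) by (auto simp: evec_def U_def)
qed

theorem mainTheorem3:
  fixes M :: "real^'n^'n" and a b :: 'n and s \<eta> :: complex and \<tau> :: real
  assumes "transpose M = M"
    and "a \<noteq> b"
    and "cospectral M a b"
    and "s \<noteq> 0"
    and "cmod \<eta> = 1"
    and "transition M \<tau> *v (evec a + s *s evec b) = \<eta> *s (evec a + s *s evec b)"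
  shows "s = 1 \<or> s = -1 \<or>
         (transition M \<tau> *v evec a = \<eta> *s evec a \<and> transition M \<tau> *v evec b = \<eta> *s evec b)"
proof -
  define U where "U = transition M \<tau>"
  have sym: "U $ b $ a = U $ a $ b"
    unfolding U_def by (rule symmetric_transition[OF assms(1)])
  have diag: "U $ b $ b = U $ a $ a"
    unfolding U_def by (rule cospectral_transition_diag[OF assms(3), symmetric])
  have eigen: "U *v evec a + s *s (U *v evec b) = \<eta> *s (evec a + s *s evec b)"
    using assms(6) by (simp add: U_def matrix_vector_right_distrib vector_scalar_commute)
  have row_a: "U $ a $ a + s * U $ a $ b = \<eta>"
    using arg_cong[OF eigen, of "\<lambda>v. v $ a"] assms(2)
    unfolding vector_add_component vector_smult_component matrix_vector_mult_evec_nth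
    by (simp add: evec_def)
  have row_b: "U $ a $ b + s * U $ a $ a = \<eta> * s"
    using arg_cong[OF eigen, of "\<lambda>v. v $ b"] assms(2)
    unfolding vector_add_component vector_smult_component matrix_vector_mult_evec_nth
    by (simp add: evec_def sym diag)
  have "(1 - s\<^sup>2) * U $ a $ b = (U $ a $ b + s * U $ a $ a) - s * (U $ a $ a + s * U $ a $ b)"
    by (simp add: algebra_simps power2_eq_square)
  then have "(1 - s\<^sup>2) * U $ a $ b = 0"
    by (simp add: row_a row_b)
  then consider "s\<^sup>2 = 1" | "U $ a $ b = 0"
    by auto
  then show ?thesis
  proof cases
    case 2
    then have "U $ a $ a = \<eta>" "U $ b $ b = \<eta>"
      using row_a diag by auto
    then show ?thesis
      using transition_evec_eigen_if_diag[OF assms(1) _ assms(5)] by (simp add: U_def)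
  qed (auto simp: power2_eq_1_iff)
qed

end
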